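(* Consider a scenario tree with node sets $\mathcal{N}(0)=\{0\},\mathcal{N}(1),\ldots,\mathcal{N}(t+1)$ and let $(\rho_{|0},\ldots,\rho_{|t})$ be a sequence of conditional risk mappings on this tree, each built from coherent risk measures, with $\rho_{|j}:\mathbb{R}^{|\mathcal{N}(j+1)|}\to\mathbb{R}^{|\mathcal{N}(j)|}$. Let $\bar\rho_t:\mathbb{R}^{|\mathcal{N}(t+1)|}\to\mathbb{R}$ be the nested risk measure $\bar\rho_t[Y]=\rho_{|0}[\rho_{|1}[\cdots\rho_{|t}[Y]\cdots]]$. Then $$\operatorname{epi}\bar\rho_t=\Big\{(Y_{t+1},Y_0)\in\mathbb{R}^{|\mathcal{N}(t+1)|+1}\ \Big|\ \exists\,(Y_j)_{j=1}^{t},\ Y_j\in\mathbb{R}^{|\mathcal{N}(j)|},\ (Y_{j+1},Y_j)\in\operatorname{epi}\rho_{|j}\ \text{for all } j\in\{0,1,\ldots,t\}\Big\}.$$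
   Context: A scenario tree: nodes are partitioned into stages, $\mathcal{N}(j)$ being the nodes at stage $j$, with the single root $0$ at stage $0$ visited with probability $\pi^0=1$; each node $i$ is visited with probability $\pi^i>0$, each non-root node has a unique ancestor, and each node $i\in\mathcal{N}(j)$ has a set of children $\mathrm{ch}(i)\subseteq\mathcal{N}(j+1)$, the sets $\mathrm{ch}(i)$, $i\in\mathcal{N}(j)$, partitioning $\mathcal{N}(j+1)$; $\mathrm{ch}(i)$ is a probability space with probability vector $\pi^{[i]}=\frac{1}{\pi^i}(\pi^{i_+})_{i_+\in\mathrm{ch}(i)}$. A coherent risk measure $\rho:\mathbb{R}^k\to\mathbb{R}$ (on a finite probability space) satisfies, for all $Z,Z'$, $c\in\mathbb{R}$, $\lambda\in[0,1]$, $\alpha\ge0$: convexity $\rho[\lambda Z+(1-\lambda)Z']\le\lambda\rho[Z]+(1-\lambda)\rho[Z']$; monotonicity $\rho[Z]\le\rho[Z']$ if $Z\le Z'$ componentwise; translation equivariance $\rho[Z+c\mathbf{1}]=\rho[Z]+c$; positive homogeneity $\rho[\alpha Z]=\alpha\rho[Z]$. Given coherent risk measures $\rho^i:\mathbb{R}^{|\mathrm{ch}(i)|}\to\mathbb{R}$ on $\mathrm{ch}(i)$ for each $i\in\mathcal{N}(j)$, the conditional risk mapping at stage $j$ is $\rho_{|j}[Z]=(\rho^i[Z^{[i]}])_{i\in\mathcal{N}(j)}$ for $Z=(Z^{i_+})_{i_+\in\mathcal{N}(j+1)}$, where $Z^{[i]}=(Z^{i_+})_{i_+\in\mathrm{ch}(i)}$.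 Its epigraph is $\operatorname{epi}\rho_{|j}=\{(Y_{j+1},Y_j)\in\mathbb{R}^{|\mathcal{N}(j+1)|+|\mathcal{N}(j)|}\mid \rho_{|j}[Y_{j+1}]\le Y_j\text{ componentwise}\}$. For a real-valued $\rho$, $\operatorname{epi}\rho=\{(Y,\gamma)\mid\rho[Y]\le\gamma\}$. *)

theory Defs
  imports Complex_Main
begin

text \<open>Nodes have an abstract type 'n.  A vector in R^{A} (A a finite set of nodes)
  is represented by a function 'n => real, only its values on A being relevant.\<close>

definition scenario_tree ::
  "nat \<Rightarrow> (nat \<Rightarrow> 'n set) \<Rightarrow> 'n \<Rightarrow> ('n \<Rightarrow> 'n set) \<Rightarrow> ('n \<Rightarrow> real) \<Rightarrow> bool" where
  "scenario_tree t N r ch \<pi> \<longleftrightarrow>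
     N 0 = {r} \<and> \<pi> r = 1 \<and>
     (\<forall>j \<le> Suc t. finite (N j)) \<and>
     (\<forall>j \<le> Suc t. \<forall>k \<le> Suc t. j \<noteq> k \<longrightarrow> N j \<inter> N k = {}) \<and>
     (\<forall>j \<le> Suc t. \<forall>i \<in> N j. \<pi> i > 0) \<and>
     (\<forall>j \<le> t. \<forall>i \<in> N j. ch i \<subseteq> N (Suc j)) \<and>
     (\<forall>j \<le> t. N (Suc j) = (\<Union>i \<in> N j. ch i)) \<and>
     (\<forall>j \<le> t. \<forall>i \<in> N j. \<forall>i' \<in> N j. i \<noteq> i' \<longrightarrow> ch i \<inter> ch i' = {}) \<and>
     (\<forall>j \<le> t. \<forall>i \<in> N j. (\<Sum>k \<in> ch i. \<pi> k) = \<pi> i)"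

text \<open>Coherent risk measure on the (finite) probability space A: a map
  R^A -> R, represented as a function on 'n => real that only depends on the values on A
  (this is implied by monotonicity w.r.t. the componentwise order on A).\<close>
definition coherent_on :: "'n set \<Rightarrow> (('n \<Rightarrow> real) \<Rightarrow> real) \<Rightarrow> bool" where
  "coherent_on A \<rho> \<longleftrightarrow>
     (\<forall>Z Z' (l::real). 0 \<le> l \<and> l \<le> 1 \<longrightarrow>
        \<rho> (\<lambda>x. l * Z x + (1 - l) * Z' x) \<le> l * \<rho> Z + (1 - l) * \<rho> Z') \<and>
     (\<forall>Z Z'. (\<forall>x \<in> A. Z x \<le> Z' x) \<longrightarrow> \<rho> Z \<le> \<rho> Z') \<and>
     (\<forall>Z (c::real). \<rho> (\<lambda>x. Z x + c) = \<rho> Z + c) \<and>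
     (\<forall>Z (\<alpha>::real). 0 \<le> \<alpha> \<longrightarrow> \<rho> (\<lambda>x. \<alpha> * Z x) = \<alpha> * \<rho> Z)"

definition cond_risk :: "('n \<Rightarrow> ('n \<Rightarrow> real) \<Rightarrow> real) \<Rightarrow> (nat \<Rightarrow> 'n set) \<Rightarrow> nat
    \<Rightarrow> ('n \<Rightarrow> real) \<Rightarrow> ('n \<Rightarrow> real)" where
  "cond_risk \<rho> N j Z = (\<lambda>i. if i \<in> N j then \<rho> i Z else 0)"

definition epi_cond :: "('n \<Rightarrow> ('n \<Rightarrow> real) \<Rightarrow> real) \<Rightarrow> (nat \<Rightarrow> 'n set) \<Rightarrow> nat
    \<Rightarrow> (('n \<Rightarrow> real) \<times> ('n \<Rightarrow> real)) set" where
  "epi_cond \<rho> N j = {(Ynext, Ycur). \<forall>i \<in> N j. cond_risk \<rho> N j Ynext i \<le> Ycur i}"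

fun nest :: "('n \<Rightarrow> ('n \<Rightarrow> real) \<Rightarrow> real) \<Rightarrow> (nat \<Rightarrow> 'n set) \<Rightarrow> nat \<Rightarrow> nat
    \<Rightarrow> ('n \<Rightarrow> real) \<Rightarrow> ('n \<Rightarrow> real)" where
  "nest \<rho> N j 0 Y = Y"
| "nest \<rho> N j (Suc k) Y = cond_risk \<rho> N j (nest \<rho> N (Suc j) k Y)"

definition nested_risk :: "('n \<Rightarrow> ('n \<Rightarrow> real) \<Rightarrow> real) \<Rightarrow> (nat \<Rightarrow> 'n set) \<Rightarrow> 'n \<Rightarrow> nat
    \<Rightarrow> ('n \<Rightarrow> real) \<Rightarrow> real" where
  "nested_risk \<rho> N r t Y = nest \<rho> N 0 (Suc t) Y r"

definition epi :: "(('n \<Rightarrow> real) \<Rightarrow> real) \<Rightarrow> (('n \<Rightarrow> real) \<times> real) set" where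
  "epi f = {(Y, \<gamma>). f Y \<le> \<gamma>}"

end

theory Submission
  imports Defs
begin

text \<open>Only monotonicity of the coherent measures enters.  The nested values
  Y_j = rho_{|j}[... rho_{|t}[Y] ...] form a chain in the epigraphs of the rho_{|j}, which
  gives one inclusion.  Conversely, along any chain (Y_{j+1}, Y_j) in epi rho_{|j},
  monotonicity of the conditional risk mappings propagates Y_j to an upper bound of
  the nested value at stage j, from the leaves down to the root.\<close>

lemma coherent_on_mono:
  assumes "coherent_on A \<rho>" "A \<subseteq> B" "\<forall>x \<in> B. Z x \<le> Z' x"
  shows "\<rho> Z \<le> \<rho> Z'"
  using assms unfolding coherent_on_def by blast

lemma cond_risk_mono:
  assumes mono: "\<And>i Z Z'. i \<in> N j \<Longrightarrow> \<forall>x \<in> N (Suc j). Z x \<le> Z' x \<Longrightarrow> \<rho> i Z \<le> \<rho> i Z'"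
    and le: "\<forall>x \<in> N (Suc j). Z x \<le> Z' x" and i: "i \<in> N j"
  shows "cond_risk \<rho> N j Z i \<le> cond_risk \<rho> N j Z' i"
  using mono[OF i le] i by (simp add: cond_risk_def)

lemma nest_le_of_epi_cond_chain:
  assumes mono: "\<And>j i Z Z'. m \<le> j \<Longrightarrow> j < m + k \<Longrightarrow> i \<in> N j \<Longrightarrow>
      \<forall>x \<in> N (Suc j). Z x \<le> Z' x \<Longrightarrow> \<rho> i Z \<le> \<rho> i Z'"
    and chain: "\<And>j. m \<le> j \<Longrightarrow> j < m + k \<Longrightarrow> (Ys (Suc j), Ys j) \<in> epi_cond \<rho> N j"
  shows "\<forall>i \<in> N m. nest \<rho> N m k (Ys (m + k)) i \<le> Ys m i"
  using assms
proof (induction k arbitrary: m)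
  case 0
  then show ?case by simp
next
  case (Suc k)
  have IH: "\<forall>x \<in> N (Suc m). nest \<rho> N (Suc m) k (Ys (Suc m + k)) x \<le> Ys (Suc m) x"
  proof (rule Suc.IH)
    fix j i and Z Z' :: "'a \<Rightarrow> real"
    assume "Suc m \<le> j" "j < Suc m + k" "i \<in> N j" "\<forall>x \<in> N (Suc j). Z x \<le> Z' x"
    then show "\<rho> i Z \<le> \<rho> i Z'" by (intro Suc.prems(1)) auto
  next
    fix j assume "Suc m \<le> j" "j < Suc m + k"
    then show "(Ys (Suc j), Ys j) \<in> epi_cond \<rho> N j" by (intro Suc.prems(2)) auto
  qed
  show ?case
  proof
    fix i assume i: "i \<in> N m"
    have "nest \<rho> N m (Suc k) (Ys (Suc m + k)) i
        = cond_risk \<rho> N m (nest \<rho> N (Suc m) k (Ys (Suc m + k))) i" by simp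
    also have "\<dots> \<le> cond_risk \<rho> N m (Ys (Suc m)) i"
      using Suc.prems(1)[of m] IH i by (intro cond_risk_mono) auto
    also have "\<dots> \<le> Ys m i"
      using Suc.prems(2)[of m] i by (simp add: epi_cond_def)
    finally show "nest \<rho> N m (Suc k) (Ys (m + Suc k)) i \<le> Ys m i" by simp
  qed
qed

lemma scenario_tree_coherent_mono:
  assumes tree: "scenario_tree t N r ch \<pi>"
    and coh: "\<And>j i. j \<le> t \<Longrightarrow> i \<in> N j \<Longrightarrow> coherent_on (ch i) (\<rho> i)"
    and "j \<le> t" "i \<in> N j" "\<forall>x \<in> N (Suc j). Z x \<le> Z' x"
  shows "\<rho> i Z \<le> \<rho> i Z'"
proof (rule coherent_on_mono[OF coh])
  show "ch i \<subseteq> N (Suc j)"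
    using tree assms(3,4) unfolding scenario_tree_def by blast
qed (use assms in auto)

theorem proposition1:
  fixes t :: nat and N :: "nat \<Rightarrow> 'n set" and r :: 'n and ch :: "'n \<Rightarrow> 'n set"
    and \<pi> :: "'n \<Rightarrow> real" and \<rho> :: "'n \<Rightarrow> ('n \<Rightarrow> real) \<Rightarrow> real"
  assumes tree: "scenario_tree t N r ch \<pi>"
    and coh: "\<And>j i. j \<le> t \<Longrightarrow> i \<in> N j \<Longrightarrow> coherent_on (ch i) (\<rho> i)"
  shows "epi (nested_risk \<rho> N r t) =
    {(Y, \<gamma>). \<exists>Ys :: nat \<Rightarrow> 'n \<Rightarrow> real.
        Ys (Suc t) = Y \<and> Ys 0 r = \<gamma> \<and>
        (\<forall>j \<le> t. (Ys (Suc j), Ys j) \<in> epi_cond \<rho> N j)}"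
proof -
  have root: "N 0 = {r}" using tree by (simp add: scenario_tree_def)
  have "nest \<rho> N 0 (Suc t) Y r \<le> \<gamma> \<longleftrightarrow> (\<exists>Ys :: nat \<Rightarrow> 'n \<Rightarrow> real.
      Ys (Suc t) = Y \<and> Ys 0 r = \<gamma> \<and> (\<forall>j \<le> t. (Ys (Suc j), Ys j) \<in> epi_cond \<rho> N j))" for Y \<gamma>
  proof
    assume le: "nest \<rho> N 0 (Suc t) Y r \<le> \<gamma>"
    define Ys where "Ys j = (if j = 0 then (\<lambda>_. \<gamma>) else nest \<rho> N j (Suc t - j) Y)" for j
    have "(Ys (Suc j), Ys j) \<in> epi_cond \<rho> N j" if "j \<le> t" for j
    proof (cases "j = 0")
      case False
      with that have "Suc t - j = Suc (t - j)" by simp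
      with False show ?thesis by (simp add: Ys_def epi_cond_def)
    qed (use le root in \<open>simp add: Ys_def epi_cond_def\<close>)
    then show "\<exists>Ys. Ys (Suc t) = Y \<and> Ys 0 r = \<gamma> \<and> (\<forall>j \<le> t. (Ys (Suc j), Ys j) \<in> epi_cond \<rho> N j)"
      by (intro exI[of _ Ys]) (simp add: Ys_def)
  next
    assume "\<exists>Ys. Ys (Suc t) = Y \<and> Ys 0 r = \<gamma> \<and> (\<forall>j \<le> t. (Ys (Suc j), Ys j) \<in> epi_cond \<rho> N j)"
    then obtain Ys where Y: "Ys (Suc t) = Y" and \<gamma>: "Ys 0 r = \<gamma>"
      and chain: "\<forall>j \<le> t. (Ys (Suc j), Ys j) \<in> epi_cond \<rho> N j" by blast
    have "\<forall>i \<in> N 0. nest \<rho> N 0 (Suc t) (Ys (0 + Suc t)) i \<le> Ys 0 i"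
      using chain by (intro nest_le_of_epi_cond_chain scenario_tree_coherent_mono[OF tree coh]) auto
    then show "nest \<rho> N 0 (Suc t) Y r \<le> \<gamma>" using root Y \<gamma> by simp
  qed
  then show ?thesis by (simp add: epi_def nested_risk_def)
qed

end
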